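(* Let $\kappa>0$ and let $\{T_i\}$ be the solution of the generalized Lohe matrix model with zero free flow and $\kappa_1=\kappa_2=\kappa$, $$\dot T_i=\kappa(T_cT_i^\dagger T_i-T_iT_c^\dagger T_i)+\kappa(T_iT_i^\dagger T_c-T_iT_c^\dagger T_i),$$ with completely separable initial data $T_i^0=u_i^0\otimes v_i^0=u_i^0(v_i^0)^\top$, where $u_i^0\in\mathbb S^{d_1-1}\subset\mathbb R^{d_1}$ and $v_i^0\in\mathbb S^{d_2-1}\subset\mathbb R^{d_2}$. Assume $$\min_{1\le i,j\le N}\langle u_i^0,u_j^0\rangle>0\quad\text{and}\quad\min_{1\le i,j\le N}\langle v_i^0,v_j^0\rangle>0.$$ Then $\lim_{t\to\infty}\|T_i(t)-T_j(t)\|_{\mathrm F}=0$ for all $1\le i,j\le N$.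
   Context: Notation: - $T_c=\frac1N\sum_kT_k$; - $T^\dagger$ is the conjugate transpose; - $\|\cdot\|_{\mathrm F}$ is the Frobenius norm; - $\langle\cdot,\cdot\rangle$ is the Euclidean inner product; - $\mathbb S^{d-1}$ is the unit sphere of $\mathbb R^d$. *)

theory Defs
  imports "HOL-Analysis.Analysis"
begin

text \<open>Real d1 x d2 matrices are represented as real^'n^'m ('m = d1 rows, 'n = d2 columns).\<close>

definition frob_norm :: "real^'n^'m \<Rightarrow> real" where
  "frob_norm A = sqrt (\<Sum>i\<in>UNIV. \<Sum>j\<in>UNIV. (A $ i $ j)^2)"

definition outer :: "real^'m \<Rightarrow> real^'n \<Rightarrow> real^'n^'m" where
  "outer u v = (\<chi> i j. u $ i * v $ j)"

definition lohe_avg :: "nat \<Rightarrow> (nat \<Rightarrow> real^'n^'m) \<Rightarrow> real^'n^'m" where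
  "lohe_avg N X = (1 / real N) *\<^sub>R (\<Sum>k<N. X k)"

definition lohe_rhs :: "real \<Rightarrow> real^'n^'m \<Rightarrow> real^'n^'m \<Rightarrow> real^'n^'m" where
  "lohe_rhs \<kappa> Tc Ti =
     \<kappa> *\<^sub>R (Tc ** transpose Ti ** Ti - Ti ** transpose Tc ** Ti)
   + \<kappa> *\<^sub>R (Ti ** transpose Ti ** Tc - Ti ** transpose Tc ** Ti)"

end

(*
  Along the flow, tr (T^T T) and tr ((T^T T)^2) are conserved, so every T_i stays a rank-one matrix
  u_i v_i^T with unit factors.  The squared overlaps (u_i . u_j)^2 and (v_i . v_j)^2 do not depend on
  the signs of the factors and evolve smoothly.  As long as the signs can be chosen so that all
  overlaps are positive, a squared overlap that equals the current minimum g grows at rate at least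
  (4 kappa / N) g (1 - g).  Hence the logistic solution of g' = (2 kappa / N) g (1 - g), started below
  the initial squared overlaps, stays below all of them forever, and
  |T_i - T_j|_F^2 = 2 - 2 (u_i . u_j) (v_i . v_j) tends to 0.
*)

theory Submission
  imports Defs
begin

lemma frob_norm_eq_norm: "frob_norm (X::real^'n^'m) = norm X"
  unfolding frob_norm_def norm_eq_sqrt_inner inner_vec_def by (simp add: power2_eq_square)

lemma matrix_add_rdistrib: "((A::real^'n^'m) + B) ** C = A ** C + B ** C"
  by (vector matrix_matrix_mult_def sum.distrib[symmetric] field_simps)

lemma matrix_diff_ldistrib: "(A::real^'n^'m) ** (B - C) = A ** B - A ** C"
  by (vector matrix_matrix_mult_def sum_subtractf[symmetric] field_simps)

lemma matrix_mult_scaleR_right: "(A::real^'n^'m) ** (c *\<^sub>R B) = c *\<^sub>R (A ** B)"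
  by (simp add: matrix_matrix_mult_def sum_distrib_left mult_ac vec_eq_iff)

lemma sum_matrix_vector_mult: "(\<Sum>k\<in>K. (A k::real^'n^'m)) *v w = (\<Sum>k\<in>K. A k *v w)"
  by (induction K rule: infinite_finite_induct) (auto simp: matrix_vector_mult_add_rdistrib)

lemma transpose_add: "transpose ((A::real^'n^'m) + B) = transpose A + transpose B"
  by (simp add: transpose_def vec_eq_iff)

lemma transpose_diff: "transpose ((A::real^'n^'m) - B) = transpose A - transpose B"
  by (simp add: transpose_def vec_eq_iff)

lemma transpose_sum: "transpose (\<Sum>k\<in>K. (A k::real^'n^'m)) = (\<Sum>k\<in>K. transpose (A k))"
  by (induction K rule: infinite_finite_induct) (auto simp: transpose_def vec_eq_iff)

lemma trace_scaleR: "trace (c *\<^sub>R (A::real^'n^'n)) = c * trace A"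
  by (simp add: trace_def sum_distrib_left)

lemma trace_transpose: "trace (transpose (A::real^'n^'n)) = trace A"
  by (simp add: trace_def transpose_def)

lemma inner_matrix_eq_trace: "(A::real^'n^'m) \<bullet> B = trace (transpose A ** B)"
  unfolding inner_vec_def trace_def matrix_matrix_mult_def transpose_def
  by (simp, subst sum.swap, simp)

lemma inner_transpose: "transpose (A::real^'n^'m) \<bullet> transpose B = A \<bullet> B"
  unfolding inner_vec_def transpose_def by (simp, subst sum.swap, simp)

lemma transpose_outer: "transpose (outer u v) = outer v u"
  by (simp add: transpose_def outer_def vec_eq_iff mult.commute)

lemma outer_scaleR_left: "outer (c *\<^sub>R u) v = c *\<^sub>R outer u v"
  by (simp add: outer_def vec_eq_iff)

lemma outer_scaleR_right: "outer u (c *\<^sub>R v) = c *\<^sub>R outer u v"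
  by (simp add: outer_def vec_eq_iff algebra_simps)

lemma outer_diff_left: "outer (u - w) v = outer u v - outer w v"
  by (simp add: outer_def vec_eq_iff algebra_simps)

lemma outer_diff_right: "outer u (v - w) = outer u v - outer u w"
  by (simp add: outer_def vec_eq_iff algebra_simps)

lemma outer_mult_vector: "outer u v *v w = (v \<bullet> w) *\<^sub>R u"
  by (simp add: outer_def matrix_vector_mult_def vec_eq_iff inner_vec_def sum_distrib_left
      sum_distrib_right mult.commute mult.left_commute)

lemma outer_mult_outer: "outer u v ** outer w z = (v \<bullet> w) *\<^sub>R outer u z"
  by (simp add: outer_def matrix_matrix_mult_def vec_eq_iff inner_vec_def sum_distrib_left
      sum_distrib_right mult_ac)

lemma matrix_mult_outer: "(A::real^'n^'m) ** outer v w = outer (A *v v) w"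
  by (simp add: outer_def matrix_matrix_mult_def matrix_vector_mult_def vec_eq_iff sum_distrib_right
      mult.assoc)

lemma outer_mult_matrix: "outer u v ** (A::real^'k^'n) = outer u (transpose A *v v)"
  by (simp add: outer_def matrix_matrix_mult_def matrix_vector_mult_def transpose_def vec_eq_iff
      sum_distrib_left mult_ac)

lemma inner_outer: "outer u v \<bullet> outer w z = (u \<bullet> w) * (v \<bullet> z)"
  unfolding outer_def inner_vec_def by (simp add: sum_distrib_left sum_distrib_right mult_ac)

lemma norm_outer: "norm (outer u v) = norm u * norm v"
  by (simp add: norm_eq_sqrt_inner inner_outer real_sqrt_mult)

lemma bounded_bilinear_matrix_mult: "bounded_bilinear (\<lambda>(A::real^'n^'m) (B::real^'k^'n). A ** B)"
  unfolding bilinear_conv_bounded_bilinear[symmetric] bilinear_def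
  by (auto intro!: linearI simp: matrix_add_ldistrib matrix_add_rdistrib matrix_mult_scaleR_right
      scalar_matrix_assoc[symmetric])

lemma bounded_linear_transpose: "bounded_linear (transpose :: real^'n^'m \<Rightarrow> real^'m^'n)"
  unfolding linear_conv_bounded_linear[symmetric]
  by (auto intro!: linearI simp: transpose_add transpose_scalar)

lemma has_vector_derivative_matrix_mult:
  fixes A :: "real \<Rightarrow> real^'n^'m" and B :: "real \<Rightarrow> real^'k^'n"
  assumes "(A has_vector_derivative A') (at t within S)" "(B has_vector_derivative B') (at t within S)"
  shows "((\<lambda>t. A t ** B t) has_vector_derivative A t ** B' + A' ** B t) (at t within S)"
  using bounded_bilinear.has_vector_derivative[OF bounded_bilinear_matrix_mult assms] .

lemma has_vector_derivative_transpose: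
  fixes A :: "real \<Rightarrow> real^'n^'m"
  assumes "(A has_vector_derivative A') F"
  shows "((\<lambda>t. transpose (A t)) has_vector_derivative transpose A') F"
  using bounded_linear.has_vector_derivative[OF bounded_linear_transpose assms] .

lemma has_real_derivative_inner:
  fixes A B :: "real \<Rightarrow> 'a::real_inner"
  assumes "(A has_vector_derivative A') (at t within S)" "(B has_vector_derivative B') (at t within S)"
  shows "((\<lambda>t. A t \<bullet> B t) has_real_derivative A t \<bullet> B' + A' \<bullet> B t) (at t within S)"
  using bounded_bilinear.has_vector_derivative[OF bounded_bilinear_inner assms]
  by (simp add: has_real_derivative_iff_has_vector_derivative)

lemma continuous_matrix_mult [continuous_intros]:
  fixes A :: "real \<Rightarrow> real^'n^'m" and B :: "real \<Rightarrow> real^'k^'n"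
  shows "continuous F A \<Longrightarrow> continuous F B \<Longrightarrow> continuous F (\<lambda>t. A t ** B t)"
  using bounded_bilinear.continuous[OF bounded_bilinear_matrix_mult] by blast

lemma continuous_transpose [continuous_intros]:
  fixes A :: "real \<Rightarrow> real^'n^'m"
  shows "continuous F A \<Longrightarrow> continuous F (\<lambda>t. transpose (A t))"
  using bounded_linear.continuous[OF bounded_linear_transpose] by blast

section \<open>The Lohe vector field and its conservation laws\<close>

lemma lohe_rhs_transpose:
  "transpose (lohe_rhs \<kappa> C (X::real^'n^'m)) = lohe_rhs \<kappa> (transpose C) (transpose X)"
  unfolding lohe_rhs_def transpose_add transpose_diff transpose_scalar matrix_transpose_mul
    transpose_transpose matrix_mul_assoc
  by (rule add.commute)

lemma lohe_avg_transpose: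
  "transpose (lohe_avg N (X::nat \<Rightarrow> real^'n^'m)) = lohe_avg N (\<lambda>k. transpose (X k))"
  by (simp add: lohe_avg_def transpose_scalar transpose_sum)

lemma lohe_avg_cong: "(\<And>k. k < N \<Longrightarrow> X k = Y k) \<Longrightarrow> lohe_avg N X = lohe_avg N Y"
  unfolding lohe_avg_def by (metis lessThan_iff sum.cong)

lemma lohe_avg_outer_mult_vector:
  "lohe_avg N (\<lambda>k. outer (U k) (V k)) *v w = (1 / real N) *\<^sub>R (\<Sum>k<N. (V k \<bullet> w) *\<^sub>R U k)"
  by (simp add: lohe_avg_def scaleR_matrix_vector_assoc[symmetric] sum_matrix_vector_mult outer_mult_vector)

lemma lohe_rhs_outer:
  assumes "norm u = 1" "norm v = 1"
  shows "lohe_rhs \<kappa> C (outer u v) =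
    outer (\<kappa> *\<^sub>R (C *v v - (u \<bullet> (C *v v)) *\<^sub>R u)) v
    + outer u (\<kappa> *\<^sub>R (transpose C *v u - (u \<bullet> (C *v v)) *\<^sub>R v))"
proof -
  have uu: "u \<bullet> u = 1" "v \<bullet> v = 1" using assms by (simp_all add: dot_square_norm)
  have c1: "C ** transpose (outer u v) ** outer u v = outer (C *v v) v"
    by (simp add: transpose_outer matrix_mult_outer outer_mult_outer uu outer_mult_vector)
  have c2: "outer u v ** transpose C ** outer u v = (u \<bullet> (C *v v)) *\<^sub>R outer u v"
    using outer_mult_matrix[of u v "transpose C"] by (simp add: outer_mult_outer inner_commute)
  have c3: "outer u v ** transpose (outer u v) ** C = outer u (transpose C *v u)"
    by (simp add: transpose_outer outer_mult_outer uu outer_mult_matrix outer_mult_vector)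
  show ?thesis
    unfolding lohe_rhs_def c1 c2 c3 by (simp only: outer_scaleR_left outer_scaleR_right outer_diff_left outer_diff_right)
qed

lemma inner_lohe_rhs: "(X::real^'n^'m) \<bullet> lohe_rhs \<kappa> C X = 0"
proof -
  let ?Z = "trace (transpose X ** C ** transpose X ** X)"
  have expand: "X \<bullet> lohe_rhs \<kappa> C X =
    \<kappa> * (?Z - trace (transpose X ** X ** transpose C ** X))
    + \<kappa> * (trace (transpose X ** X ** transpose X ** C) - trace (transpose X ** X ** transpose C ** X))"
    unfolding lohe_rhs_def inner_matrix_eq_trace
    by (simp only: matrix_add_ldistrib matrix_diff_ldistrib matrix_mult_scaleR_right trace_add trace_sub
        trace_scaleR matrix_mul_assoc)
  have "trace (transpose X ** X ** transpose C ** X) = ?Z"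
    by (subst trace_transpose[symmetric]) (simp only: matrix_transpose_mul transpose_transpose matrix_mul_assoc)
  moreover have "trace (transpose X ** X ** transpose X ** C) = ?Z"
    using trace_mul_sym[of "transpose X ** X" "transpose X ** C"] by (simp only: matrix_mul_assoc)
  ultimately show ?thesis unfolding expand by simp
qed

lemma inner_gram_lohe_rhs: "(transpose X ** X) \<bullet> (transpose X ** lohe_rhs \<kappa> C (X::real^'n^'m)) = 0"
proof -
  let ?P = "transpose X ** X"
  let ?Z = "trace (?P ** ?P ** transpose X ** C)"
  have expand: "?P \<bullet> (transpose X ** lohe_rhs \<kappa> C X) =
    \<kappa> * (trace (?P ** transpose X ** C ** ?P) - trace (?P ** ?P ** transpose C ** X))
    + \<kappa> * (?Z - trace (?P ** ?P ** transpose C ** X))"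
    unfolding lohe_rhs_def inner_matrix_eq_trace matrix_transpose_mul transpose_transpose
    by (simp only: matrix_add_ldistrib matrix_diff_ldistrib matrix_mult_scaleR_right trace_add trace_sub
        trace_scaleR matrix_mul_assoc)
  have "trace (?P ** ?P ** transpose C ** X) = trace (transpose X ** C ** ?P ** ?P)"
    by (subst trace_transpose[symmetric]) (simp only: matrix_transpose_mul transpose_transpose matrix_mul_assoc)
  also have "\<dots> = ?Z"
    using trace_mul_sym[of "transpose X ** C" "?P ** ?P"] by (simp only: matrix_mul_assoc)
  finally have transposed_term: "trace (?P ** ?P ** transpose C ** X) = ?Z" .
  have cyclic_term: "trace (?P ** transpose X ** C ** ?P) = ?Z"
    using trace_mul_sym[of "?P ** transpose X ** C" ?P] by (simp only: matrix_mul_assoc)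
  show ?thesis unfolding expand transposed_term cyclic_term by simp
qed

lemma lohe_norms_conserved:
  fixes X :: "real \<Rightarrow> real^'n^'m"
  assumes ode: "\<And>t. 0 \<le> t \<Longrightarrow>
      (X has_vector_derivative lohe_rhs \<kappa> (C t) (X t)) (at t within {0..})"
    and "0 \<le> t"
  shows "norm (X t) = norm (X 0)" and "norm (transpose (X t) ** X t) = norm (transpose (X 0) ** X 0)"
proof -
  have const: "f t = f 0" if "\<And>s. 0 \<le> s \<Longrightarrow> (f has_real_derivative 0) (at s within {0..})" for f
    using has_field_derivative_zero_constant[of "{0..}" f] that \<open>0 \<le> t\<close>
    by (metis atLeast_iff convex_real_interval(1) order_refl)
  have "X t \<bullet> X t = X 0 \<bullet> X 0"
  proof (rule const)
    fix s :: real assume "0 \<le> s"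
    from has_real_derivative_inner[OF ode ode, OF this this]
    show "((\<lambda>s. X s \<bullet> X s) has_real_derivative 0) (at s within {0..})"
      by (simp add: inner_lohe_rhs inner_commute[of _ "X s"])
  qed
  then show "norm (X t) = norm (X 0)" by (simp add: norm_eq_sqrt_inner)
  let ?G = "\<lambda>s. transpose (X s) ** X s"
  have "?G t \<bullet> ?G t = ?G 0 \<bullet> ?G 0"
  proof (rule const)
    fix s :: real assume s: "0 \<le> s"
    let ?D = "lohe_rhs \<kappa> (C s) (X s)"
    have sym: "?G s \<bullet> (transpose ?D ** X s) = ?G s \<bullet> (transpose (X s) ** ?D)"
      by (subst inner_transpose[symmetric]) (simp add: matrix_transpose_mul)
    have "(?G has_vector_derivative transpose (X s) ** ?D + transpose ?D ** X s) (at s within {0..})"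
      using has_vector_derivative_matrix_mult[OF has_vector_derivative_transpose[OF ode[OF s]] ode[OF s]] .
    from has_real_derivative_inner[OF this this]
    show "((\<lambda>s. ?G s \<bullet> ?G s) has_real_derivative 0) (at s within {0..})"
      by (simp add: inner_add_right inner_add_left inner_commute[of _ "?G s"] sym inner_gram_lohe_rhs)
  qed
  then show "norm (?G t) = norm (?G 0)" by (simp add: norm_eq_sqrt_inner)
qed

section \<open>Rank-one matrices\<close>

lemma eq_projection_if_abs_inner_eq_norm:
  fixes p x :: "'a::real_inner"
  assumes "norm p = 1" "\<bar>p \<bullet> x\<bar> = norm x"
  shows "x = (p \<bullet> x) *\<^sub>R p"
proof -
  have pp: "p \<bullet> p = 1" using assms(1) by (simp add: dot_square_norm)
  have "(x - (p \<bullet> x) *\<^sub>R p) \<bullet> (x - (p \<bullet> x) *\<^sub>R p) = x \<bullet> x - (p \<bullet> x) * (p \<bullet> x)"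
    by (simp add: inner_diff_left inner_diff_right inner_commute pp algebra_simps)
  also have "\<dots> = 0"
    using assms(2) by (metis abs_mult_self_eq power2_eq_square power2_norm_eq_inner right_minus_eq)
  finally show ?thesis by simp
qed

lemma gram_matrix_nth: "(transpose X ** X) $ i $ j = column i X \<bullet> column j (X::real^'n^'m)"
  by (simp add: matrix_matrix_mult_def transpose_def column_def inner_vec_def)

lemma norm_matrix_sq_columns: "norm (X::real^'n^'m)^2 = (\<Sum>j\<in>UNIV. norm (column j X)^2)"
  unfolding power2_norm_eq_inner inner_vec_def column_def
  by (simp, subst sum.swap, simp)

lemma norm_gram_sq:
  "norm (transpose X ** X)^2 = (\<Sum>i\<in>UNIV. \<Sum>j\<in>UNIV. (column i X \<bullet> column j (X::real^'n^'m))^2)"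
  unfolding power2_norm_eq_inner
  by (simp add: inner_vec_def gram_matrix_nth power2_eq_square)

lemma abs_inner_columns_if_norm_gram:
  fixes X :: "real^'n^'m"
  assumes "norm (transpose X ** X) = norm X ^ 2"
  shows "\<bar>column i X \<bullet> column j X\<bar> = norm (column i X) * norm (column j X)"
proof -
  let ?c = "\<lambda>j. column j X"
  have "(\<Sum>i\<in>UNIV. \<Sum>j\<in>UNIV. norm (?c i)^2 * norm (?c j)^2)
      = (\<Sum>i\<in>UNIV. norm (?c i)^2) * (\<Sum>j\<in>UNIV. norm (?c j)^2)"
    by (simp add: sum_product)
  also have "\<dots> = (norm X ^ 2)^2"
    unfolding norm_matrix_sq_columns[of X, symmetric] by (simp add: power2_eq_square)
  also have "\<dots> = (\<Sum>i\<in>UNIV. \<Sum>j\<in>UNIV. (?c i \<bullet> ?c j)^2)"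
    using norm_gram_sq[of X] assms by simp
  finally have "(\<Sum>i\<in>UNIV. \<Sum>j\<in>UNIV. norm (?c i)^2 * norm (?c j)^2 - (?c i \<bullet> ?c j)^2) = 0"
    by (simp add: sum_subtractf)
  moreover have "0 \<le> norm (?c i)^2 * norm (?c j)^2 - (?c i \<bullet> ?c j)^2" for i j
    using power_mono[OF Cauchy_Schwarz_ineq2[of "?c i" "?c j"], of 2]
    by (simp add: power_mult_distrib)
  ultimately have "\<forall>i\<in>UNIV. \<forall>j\<in>UNIV. norm (?c i)^2 * norm (?c j)^2 - (?c i \<bullet> ?c j)^2 = 0"
    by (subst (asm) sum_nonneg_eq_0_iff; simp add: sum_nonneg sum_nonneg_eq_0_iff)
  then have "(?c i \<bullet> ?c j)^2 = (norm (?c i) * norm (?c j))^2"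
    by (simp add: power_mult_distrib)
  then show ?thesis
    by (metis real_sqrt_abs abs_of_nonneg norm_ge_zero mult_nonneg_nonneg)
qed

lemma unit_outer_if_gram_norm:
  fixes X :: "real^'n^'m"
  assumes X: "norm X = 1" and G: "norm (transpose X ** X) = 1"
  shows "\<exists>u v. norm u = 1 \<and> norm v = 1 \<and> X = outer u v"
proof -
  let ?c = "\<lambda>j. column j X"
  have cols: "(\<Sum>j\<in>UNIV. norm (?c j)^2) = 1"
    using norm_matrix_sq_columns[of X] X by simp
  have parallel: "\<bar>?c i \<bullet> ?c j\<bar> = norm (?c i) * norm (?c j)" for i j
    by (rule abs_inner_columns_if_norm_gram) (simp add: X G)
  obtain j0 where j0: "?c j0 \<noteq> 0"
    using cols by force
  define p where "p = (1 / norm (?c j0)) *\<^sub>R ?c j0"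
  have p: "norm p = 1" using j0 by (simp add: p_def)
  have pc: "\<bar>p \<bullet> ?c j\<bar> = norm (?c j)" for j
    using parallel[of j0 j] j0 by (simp add: p_def abs_mult)
  have col_eq: "?c j = (p \<bullet> ?c j) *\<^sub>R p" for j
    by (rule eq_projection_if_abs_inner_eq_norm[OF p pc])
  define q where "q = (\<chi> j. p \<bullet> ?c j)"
  have "X = outer p q"
  proof -
    have "X $ i $ j = p $ i * q $ j" for i j
      using arg_cong[OF col_eq[of j], of "\<lambda>x. x $ i"] by (simp add: q_def column_def)
    then show ?thesis by (simp add: outer_def vec_eq_iff)
  qed
  moreover have "norm q = 1"
  proof -
    have "norm q^2 = (\<Sum>j\<in>UNIV. (q $ j)^2)"
      by (simp add: norm_vec_def L2_set_def sum_nonneg)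
    also have "\<dots> = (\<Sum>j\<in>UNIV. (p \<bullet> ?c j)^2)"
      by (simp add: q_def)
    also have "\<dots> = (\<Sum>j\<in>UNIV. norm (?c j)^2)"
      by (metis power2_abs pc)
    finally have "norm q^2 = 1" using cols by simp
    then show ?thesis by (smt (verit) norm_ge_zero power2_eq_1_iff)
  qed
  ultimately show ?thesis using p by blast
qed

section \<open>Overlaps of rank-one configurations\<close>

text \<open>Overlaps of the factors of rank-one matrices, expressed without choosing the factors, which
  are only determined up to a common sign.\<close>

definition col_overlap :: "real^'n^'m \<Rightarrow> real^'n^'m \<Rightarrow> real" where
  "col_overlap A B = norm (transpose A ** B)^2"

definition col_overlap_deriv :: "real^'n^'m \<Rightarrow> real^'n^'m \<Rightarrow> real^'n^'m \<Rightarrow> real^'n^'m \<Rightarrow> real" where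
  "col_overlap_deriv A A' B B' = 2 * ((transpose A ** B) \<bullet> (transpose A' ** B + transpose A ** B'))"

definition triple_overlap :: "real^'n^'m \<Rightarrow> real^'n^'m \<Rightarrow> real^'n^'m \<Rightarrow> real" where
  "triple_overlap A B C = (transpose A ** B) \<bullet> (transpose A ** C ** transpose C ** B)"

lemma has_real_derivative_col_overlap:
  assumes "(A has_vector_derivative A') (at t within S)" "(B has_vector_derivative B') (at t within S)"
  shows "((\<lambda>t. col_overlap (A t) (B t)) has_real_derivative col_overlap_deriv (A t) A' (B t) B') (at t within S)"
proof -
  have "((\<lambda>t. transpose (A t) ** B t) has_vector_derivative transpose (A t) ** B' + transpose A' ** B t)
      (at t within S)"
    by (rule has_vector_derivative_matrix_mult[OF has_vector_derivative_transpose[OF assms(1)] assms(2)])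
  from has_real_derivative_inner[OF this this] show ?thesis
    unfolding col_overlap_def col_overlap_deriv_def power2_norm_eq_inner
    by (simp add: inner_commute[of _ "transpose (A t) ** B t"] algebra_simps)
qed

lemma col_overlap_outer:
  "norm v = 1 \<Longrightarrow> norm z = 1 \<Longrightarrow> col_overlap (outer u v) (outer w z) = (u \<bullet> w)^2"
  by (simp add: col_overlap_def power2_norm_eq_inner transpose_outer outer_mult_outer inner_outer
      dot_square_norm norm_outer)

lemma triple_overlap_outer:
  "norm v0 = 1 \<Longrightarrow> norm v1 = 1 \<Longrightarrow> norm v2 = 1 \<Longrightarrow>
   triple_overlap (outer u0 v0) (outer u1 v1) (outer u2 v2) = (u0 \<bullet> u1) * (u1 \<bullet> u2) * (u0 \<bullet> u2)"
  by (simp add: triple_overlap_def transpose_outer outer_mult_outer inner_outer scalar_matrix_assoc[symmetric]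
      dot_square_norm norm_outer inner_commute mult_ac)

lemma col_overlap_deriv_outer:
  assumes "norm v = 1" "dv \<bullet> v = 0" "norm z = 1" "dz \<bullet> z = 0"
  shows "col_overlap_deriv (outer u v) (outer du v + outer u dv) (outer w z) (outer dw z + outer w dz)
     = 2 * (u \<bullet> w) * (du \<bullet> w + dw \<bullet> u)"
  using assms
  by (simp add: col_overlap_deriv_def transpose_add transpose_outer matrix_add_rdistrib matrix_add_ldistrib
      outer_mult_outer inner_add_right inner_outer dot_square_norm norm_outer inner_commute algebra_simps)

lemma continuous_col_overlap [continuous_intros]:
  fixes A B :: "real \<Rightarrow> real^'n^'m"
  shows "continuous F A \<Longrightarrow> continuous F B \<Longrightarrow> continuous F (\<lambda>t. col_overlap (A t) (B t))"
  unfolding col_overlap_def by (intro continuous_intros)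

lemma continuous_triple_overlap [continuous_intros]:
  fixes A B C :: "real \<Rightarrow> real^'n^'m"
  shows "continuous F A \<Longrightarrow> continuous F B \<Longrightarrow> continuous F C \<Longrightarrow>
    continuous F (\<lambda>t. triple_overlap (A t) (B t) (C t))"
  unfolding triple_overlap_def by (intro continuous_intros)

lemma norm_diff_unit:
  "norm x = 1 \<Longrightarrow> norm y = 1 \<Longrightarrow> norm (x - y) = sqrt (2 - 2 * (x \<bullet> (y::'a::real_inner)))"
proof -
  assume "norm x = 1" "norm y = 1"
  then have "x \<bullet> x = 1" "y \<bullet> y = 1" by (simp_all add: dot_square_norm)
  then show ?thesis by (simp add: norm_eq_sqrt_inner inner_diff_left inner_diff_right inner_commute)
qed

lemma inner_outer_sq:
  assumes "norm u = 1" "norm v = 1" "norm w = 1" "norm z = 1"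
  shows "(outer u v \<bullet> outer w z)^2
    = col_overlap (outer u v) (outer w z) * col_overlap (transpose (outer u v)) (transpose (outer w z))"
  using assms by (simp add: inner_outer col_overlap_outer transpose_outer power_mult_distrib)

lemma triple_overlap_sq:
  assumes "norm u0 = 1" "norm v0 = 1" "norm u1 = 1" "norm v1 = 1" "norm u2 = 1" "norm v2 = 1"
  shows "triple_overlap (outer u0 v0) (outer u1 v1) (outer u2 v2)^2
    = col_overlap (outer u0 v0) (outer u1 v1) * col_overlap (outer u1 v1) (outer u2 v2)
      * col_overlap (outer u0 v0) (outer u2 v2)"
  using assms by (simp add: triple_overlap_outer col_overlap_outer power_mult_distrib)

definition coherent_factors ::
  "nat \<Rightarrow> (nat \<Rightarrow> real^'n^'m) \<Rightarrow> (nat \<Rightarrow> real^'m) \<Rightarrow> (nat \<Rightarrow> real^'n) \<Rightarrow> bool" where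
  "coherent_factors N X U V \<longleftrightarrow>
     (\<forall>k<N. norm (U k) = 1 \<and> norm (V k) = 1 \<and> X k = outer (U k) (V k)
        \<and> (\<forall>l<N. 0 < U k \<bullet> U l \<and> 0 < V k \<bullet> V l))"

lemma coherent_factors_transpose:
  "coherent_factors N X U V \<Longrightarrow> coherent_factors N (\<lambda>k. transpose (X k)) V U"
  by (simp add: coherent_factors_def transpose_outer)

lemma coherent_factors_exist:
  fixes X :: "nat \<Rightarrow> real^'n^'m"
  assumes "0 < N"
    and rank_one: "\<And>k. k < N \<Longrightarrow> \<exists>u v. norm u = 1 \<and> norm v = 1 \<and> X k = outer u v"
    and inner_pos: "\<And>k l. k < N \<Longrightarrow> l < N \<Longrightarrow> 0 < X k \<bullet> X l"
    and triple_pos: "\<And>k l. k < N \<Longrightarrow> l < N \<Longrightarrow> 0 < triple_overlap (X 0) (X k) (X l)"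
  shows "\<exists>U V. coherent_factors N X U V"
proof -
  obtain U0 V0
    where UV0: "\<And>k. k < N \<Longrightarrow> norm (U0 k) = 1 \<and> norm (V0 k) = 1 \<and> X k = outer (U0 k) (V0 k)"
    using rank_one by metis
  define \<sigma> where "\<sigma> k = sgn (U0 0 \<bullet> U0 k)" for k
  define U where "U k = \<sigma> k *\<^sub>R U0 k" for k
  define V where "V k = \<sigma> k *\<^sub>R V0 k" for k
  have nz: "U0 0 \<bullet> U0 k \<noteq> 0" if "k < N" for k
  proof
    assume "U0 0 \<bullet> U0 k = 0"
    then have "triple_overlap (X 0) (X k) (X k) = 0"
      using UV0[OF \<open>0 < N\<close>] UV0[OF that] by (simp add: triple_overlap_outer)
    then show False using triple_pos[OF that that] by simp
  qed
  then have \<sigma>_unit: "\<sigma> k * \<sigma> k = 1" "\<bar>\<sigma> k\<bar> = 1" if "k < N" for k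
    using that by (auto simp: \<sigma>_def sgn_if)
  have factor: "norm (U k) = 1 \<and> norm (V k) = 1 \<and> X k = outer (U k) (V k)" if "k < N" for k
    using UV0[OF that] \<sigma>_unit[OF that]
    by (auto simp: U_def V_def outer_scaleR_left outer_scaleR_right)
  have U_pos0: "0 < U 0 \<bullet> U k" if "k < N" for k
    using nz[OF that] UV0[OF \<open>0 < N\<close>] by (simp add: U_def \<sigma>_def sgn_if dot_square_norm)
  have U_pos: "0 < U k \<bullet> U l" if "k < N" "l < N" for k l
  proof -
    have "0 < (U 0 \<bullet> U k) * (U k \<bullet> U l) * (U 0 \<bullet> U l)"
      using triple_pos[OF that] factor[OF \<open>0 < N\<close>] factor[OF that(1)] factor[OF that(2)]
      by (simp add: triple_overlap_outer)
    then show ?thesis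
      using U_pos0[OF that(1)] U_pos0[OF that(2)] by (simp add: zero_less_mult_iff)
  qed
  have V_pos: "0 < V k \<bullet> V l" if "k < N" "l < N" for k l
    using inner_pos[OF that] U_pos[OF that] factor[OF that(1)] factor[OF that(2)]
    by (simp add: inner_outer zero_less_mult_iff)
  show ?thesis
    using factor U_pos V_pos unfolding coherent_factors_def by blast
qed

definition coupling_sum :: "nat \<Rightarrow> (nat \<Rightarrow> real^'m) \<Rightarrow> (nat \<Rightarrow> real^'n) \<Rightarrow> nat \<Rightarrow> nat \<Rightarrow> real" where
  "coupling_sum N U V a b = (\<Sum>l<N. (V l \<bullet> V a) * (U l \<bullet> U b - (U a \<bullet> U l) * (U a \<bullet> U b)))"

text \<open>Every summand is nonnegative because \<open>U a \<bullet> U l \<le> 1\<close> and \<open>U l \<bullet> U b \<ge> \<surd>g = U a \<bullet> U b\<close>;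
  the summand \<open>l = b\<close> alone gives the bound.\<close>

lemma coupling_sum_lower_bound:
  fixes U :: "nat \<Rightarrow> real^'m" and V :: "nat \<Rightarrow> real^'n"
  assumes ab: "a < N" "b < N"
    and unit: "\<And>k. k < N \<Longrightarrow> norm (U k) = 1"
    and pos: "\<And>k l. k < N \<Longrightarrow> l < N \<Longrightarrow> 0 < U k \<bullet> U l \<and> 0 < V k \<bullet> V l"
    and low: "\<And>k l. k < N \<Longrightarrow> l < N \<Longrightarrow> g \<le> (U k \<bullet> U l)^2 \<and> g \<le> (V k \<bullet> V l)^2"
    and eq: "(U a \<bullet> U b)^2 = g" and g: "0 < g" "g < 1"
  shows "sqrt g * (1 - g) \<le> coupling_sum N U V a b"
proof -
  have sqrt_le: "sqrt g \<le> x" if "g \<le> x^2" "0 < x" for x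
    using that real_sqrt_le_mono[of g "x^2"] by simp
  have ab_eq: "U a \<bullet> U b = sqrt g" using eq pos[OF ab] by (metis abs_of_pos real_sqrt_abs)
  let ?f = "\<lambda>l. (V l \<bullet> V a) * (U l \<bullet> U b - (U a \<bullet> U l) * (U a \<bullet> U b))"
  have nonneg: "0 \<le> ?f l" if "l \<in> {..<N}" for l
  proof -
    have l: "l < N" using that by simp
    have "U a \<bullet> U l \<le> 1" using norm_cauchy_schwarz[of "U a" "U l"] unit[OF ab(1)] unit[OF l] by simp
    moreover have "sqrt g \<le> U l \<bullet> U b" using low[OF l ab(2)] pos[OF l ab(2)] sqrt_le by blast
    ultimately have "(U a \<bullet> U l) * sqrt g \<le> U l \<bullet> U b"
      using g by (smt (verit) mult_right_mono mult_left_le_one_le real_sqrt_ge_zero)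
    then show ?thesis using pos[OF l ab(1)] ab_eq by simp
  qed
  have "?f b \<le> coupling_sum N U V a b"
    unfolding coupling_sum_def by (rule member_le_sum[OF _ nonneg]) (use ab in auto)
  moreover have "U b \<bullet> U b = 1" using unit[OF ab(2)] by (simp add: dot_square_norm)
  moreover have "sqrt g \<le> V b \<bullet> V a" using low[OF ab(2,1)] pos[OF ab(2,1)] sqrt_le by blast
  ultimately show ?thesis using eq g
    by (smt (verit, best) mult_right_mono power2_eq_square)
qed

lemma col_overlap_deriv_lohe_coherent:
  fixes X :: "nat \<Rightarrow> real^'n^'m"
  assumes ij: "i < N" "j < N" and coh: "coherent_factors N X U V"
  shows "col_overlap_deriv (X i) (lohe_rhs \<kappa> (lohe_avg N X) (X i)) (X j) (lohe_rhs \<kappa> (lohe_avg N X) (X j))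
    = 2 * (U i \<bullet> U j) * (\<kappa> / N * (coupling_sum N U V i j + coupling_sum N U V j i))"
proof -
  have unit: "\<And>k. k < N \<Longrightarrow> norm (U k) = 1" "\<And>k. k < N \<Longrightarrow> norm (V k) = 1"
    and X: "\<And>k. k < N \<Longrightarrow> X k = outer (U k) (V k)"
    using coh by (simp_all add: coherent_factors_def)
  define C where "C = lohe_avg N X"
  define du where "du k = \<kappa> *\<^sub>R (C *v V k - (U k \<bullet> (C *v V k)) *\<^sub>R U k)" for k
  define dv where "dv k = \<kappa> *\<^sub>R (transpose C *v U k - (U k \<bullet> (C *v V k)) *\<^sub>R V k)" for k
  have rhs: "lohe_rhs \<kappa> C (outer (U k) (V k)) = outer (du k) (V k) + outer (U k) (dv k)" if "k < N" for k
    unfolding du_def dv_def by (rule lohe_rhs_outer[OF unit(1,2)[OF that]])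
  have dv_perp: "dv k \<bullet> V k = 0" if "k < N" for k
    using unit(2)[OF that] by (simp add: dv_def inner_diff_left dot_lmul_matrix dot_square_norm)
  have C_mult: "(C *v V a) \<bullet> w = (1 / real N) * (\<Sum>l<N. (V l \<bullet> V a) * (U l \<bullet> w))" for a w
  proof -
    have "C = lohe_avg N (\<lambda>k. outer (U k) (V k))" unfolding C_def by (rule lohe_avg_cong) (simp add: X)
    then show ?thesis by (simp add: lohe_avg_outer_mult_vector inner_sum_left sum_distrib_left)
  qed
  have du_inner: "du a \<bullet> U b = \<kappa> / N * coupling_sum N U V a b" for a b
  proof -
    have "du a \<bullet> U b = \<kappa> * ((C *v V a) \<bullet> U b - (U a \<bullet> (C *v V a)) * (U a \<bullet> U b))"
      by (simp add: du_def inner_diff_left)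
    also have "\<dots> = \<kappa> / N *
        (\<Sum>l<N. (V l \<bullet> V a) * (U l \<bullet> U b) - (V l \<bullet> V a) * (U l \<bullet> U a) * (U a \<bullet> U b))"
      using C_mult[of a "U b"] C_mult[of a "U a"]
      by (simp add: inner_commute sum_subtractf sum_distrib_left sum_distrib_right algebra_simps)
    finally show ?thesis by (simp add: coupling_sum_def algebra_simps inner_commute)
  qed
  have "col_overlap_deriv (X i) (lohe_rhs \<kappa> C (X i)) (X j) (lohe_rhs \<kappa> C (X j))
     = 2 * (U i \<bullet> U j) * (du i \<bullet> U j + du j \<bullet> U i)"
    unfolding X[OF ij(1)] X[OF ij(2)] rhs[OF ij(1)] rhs[OF ij(2)]
    by (rule col_overlap_deriv_outer[OF unit(2)[OF ij(1)] dv_perp[OF ij(1)] unit(2)[OF ij(2)] dv_perp[OF ij(2)]])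
  then show ?thesis unfolding C_def du_inner by (simp add: distrib_left)
qed

lemma col_overlap_deriv_lohe_lower_bound:
  fixes X :: "nat \<Rightarrow> real^'n^'m"
  assumes "0 \<le> \<kappa>" and ij: "i < N" "j < N" and coh: "coherent_factors N X U V"
    and low_overlap: "\<And>k l. k < N \<Longrightarrow> l < N \<Longrightarrow>
      g \<le> col_overlap (X k) (X l) \<and> g \<le> col_overlap (transpose (X k)) (transpose (X l))"
    and eq_overlap: "col_overlap (X i) (X j) = g" and g: "0 < g" "g < 1"
  shows "4 * \<kappa> / N * g * (1 - g) \<le>
    col_overlap_deriv (X i) (lohe_rhs \<kappa> (lohe_avg N X) (X i)) (X j) (lohe_rhs \<kappa> (lohe_avg N X) (X j))"
proof -
  have unit: "\<And>k. k < N \<Longrightarrow> norm (U k) = 1" "\<And>k. k < N \<Longrightarrow> norm (V k) = 1"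
    and X: "\<And>k. k < N \<Longrightarrow> X k = outer (U k) (V k)"
    and pos: "\<And>k l. k < N \<Longrightarrow> l < N \<Longrightarrow> 0 < U k \<bullet> U l \<and> 0 < V k \<bullet> V l"
    using coh by (simp_all add: coherent_factors_def)
  have low: "g \<le> (U k \<bullet> U l)^2 \<and> g \<le> (V k \<bullet> V l)^2" if "k < N" "l < N" for k l
    using low_overlap[OF that] unit[OF that(1)] unit[OF that(2)]
    by (simp add: X that transpose_outer col_overlap_outer)
  have eq: "(U i \<bullet> U j)^2 = g"
    using eq_overlap unit[OF ij(1)] unit[OF ij(2)] by (simp add: X ij col_overlap_outer)
  have "sqrt g * (1 - g) \<le> coupling_sum N U V i j"
    by (rule coupling_sum_lower_bound[OF ij unit(1) pos low eq g])
  moreover have "sqrt g * (1 - g) \<le> coupling_sum N U V j i"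
    using coupling_sum_lower_bound[OF ij(2,1) unit(1) pos low _ g] eq by (simp add: inner_commute)
  ultimately have bound:
    "\<kappa> / N * (2 * sqrt g * (1 - g)) \<le> \<kappa> / N * (coupling_sum N U V i j + coupling_sum N U V j i)"
    using \<open>0 \<le> \<kappa>\<close> by (intro mult_left_mono) auto
  have ij_eq: "U i \<bullet> U j = sqrt g" using eq pos[OF ij] by (metis abs_of_pos real_sqrt_abs)
  have "2 * sqrt g * (\<kappa> / N * (2 * sqrt g * (1 - g)))
      \<le> col_overlap_deriv (X i) (lohe_rhs \<kappa> (lohe_avg N X) (X i)) (X j) (lohe_rhs \<kappa> (lohe_avg N X) (X j))"
    unfolding col_overlap_deriv_lohe_coherent[OF ij coh] ij_eq by (rule mult_left_mono[OF bound]) (use g in simp)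
  moreover have "2 * s * (\<kappa> / N * (2 * s * (1 - g))) = 4 * \<kappa> / N * (s * s) * (1 - g)" for s
    by (simp add: field_simps)
  moreover have "sqrt g * sqrt g = g" using g by simp
  ultimately show ?thesis by metis
qed

definition logistic :: "real \<Rightarrow> real \<Rightarrow> real \<Rightarrow> real" where
  "logistic a c t = 1 / (1 + a * exp (- (c * t)))"

lemma logistic_pos: "0 < a \<Longrightarrow> 0 < logistic a c t"
  and logistic_less_1: "0 < a \<Longrightarrow> logistic a c t < 1"
  by (simp_all add: logistic_def add_pos_pos)

lemma logistic_0_less: "0 < m \<Longrightarrow> logistic (1 / m) c 0 < m"
  by (simp add: logistic_def field_simps)

lemma has_real_derivative_logistic:
  assumes "0 < a"
  shows "(logistic a c has_real_derivative c * logistic a c t * (1 - logistic a c t)) (at t)"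
proof -
  have p: "0 < a * exp (- (c * t))" using assms by simp
  have "(logistic a c has_real_derivative a * (exp (- (c * t)) * c) / (1 + a * exp (- (c * t)))^2) (at t)"
    unfolding logistic_def using p
    by (auto intro!: derivative_eq_intros simp: power2_eq_square field_simps)
  moreover have "a * (exp (- (c * t)) * c) / (1 + a * exp (- (c * t)))^2
      = c * logistic a c t * (1 - logistic a c t)"
    using p by (simp add: logistic_def field_simps power2_eq_square)
  ultimately show ?thesis by simp
qed

lemma logistic_tendsto_1:
  assumes "0 < c"
  shows "(logistic a c \<longlongrightarrow> 1) at_top"
proof -
  have "filterlim (\<lambda>t. - (c * t)) at_bot at_top"
    using filterlim_tendsto_pos_mult_at_top[OF tendsto_const assms filterlim_ident]
    by (simp add: filterlim_uminus_at_top)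
  then have "((\<lambda>t. exp (- (c * t))) \<longlongrightarrow> 0) at_top"
    by (rule filterlim_compose[OF exp_at_bot])
  then have "((\<lambda>t. 1 / (1 + a * exp (- (c * t)))) \<longlongrightarrow> 1 / (1 + a * 0)) at_top"
    by (intro tendsto_intros) auto
  then show ?thesis by (simp add: logistic_def[abs_def])
qed

lemma real_induct_at_right:
  fixes P :: "real \<Rightarrow> bool"
  assumes step: "\<And>s. a \<le> s \<Longrightarrow> (\<And>t. a \<le> t \<Longrightarrow> t < s \<Longrightarrow> P t) \<Longrightarrow> P s"
    and right: "\<And>s. a \<le> s \<Longrightarrow> P s \<Longrightarrow> eventually P (at_right s)"
    and "a \<le> t"
  shows "P t"
proof (rule ccontr)
  assume "\<not> P t"
  define B where "B = {t. a \<le> t \<and> \<not> P t}"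
  have B: "t \<in> B" "bdd_below B"
    using \<open>a \<le> t\<close> \<open>\<not> P t\<close> by (auto simp: B_def bdd_below_def)
  define s where "s = Inf B"
  have "a \<le> s" unfolding s_def using B(1) by (intro cInf_greatest) (auto simp: B_def)
  have s_le: "s \<le> x" if "x \<in> B" for x
    unfolding s_def using that B(2) by (rule cInf_lower)
  have "P s"
    using step[OF \<open>a \<le> s\<close>] s_le by (force simp: B_def)
  then obtain b where "s < b" and b: "\<And>y. s < y \<Longrightarrow> y < b \<Longrightarrow> P y"
    using right[OF \<open>a \<le> s\<close>] unfolding eventually_at_right_field by blast
  have "b \<le> s" unfolding s_def
  proof (rule cInf_greatest)
    show "B \<noteq> {}" using B(1) by auto
    fix x assume "x \<in> B"
    then show "b \<le> x" using s_le[of x] b[of x] \<open>P s\<close> by (force simp: B_def)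
  qed
  then show False using \<open>s < b\<close> by simp
qed

lemma nonneg_if_nonneg_at_left:
  fixes f :: "real \<Rightarrow> real"
  assumes "0 < s" "continuous (at s within {0..}) f" "\<And>t. 0 \<le> t \<Longrightarrow> t < s \<Longrightarrow> 0 \<le> f t"
  shows "0 \<le> f s"
proof -
  have "at s within {0..} = at s" using assms(1) by (intro at_within_interior) simp
  then have "(f \<longlongrightarrow> f s) (at_left s)"
    using assms(2) by (auto simp: continuous_within intro: tendsto_mono[OF at_le])
  moreover have "eventually (\<lambda>t. 0 \<le> f t) (at_left s)"
    using eventually_at_left_real[OF assms(1)] by eventually_elim (auto intro: assms(3))
  ultimately show ?thesis by (rule tendsto_lowerbound) simp
qed

lemma derivative_nonpos_at_first_zero:
  fixes f :: "real \<Rightarrow> real"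
  assumes "(f has_real_derivative d) (at s within {0..})" "0 < s" "f s = 0"
    and "\<And>t. 0 \<le> t \<Longrightarrow> t < s \<Longrightarrow> 0 < f t"
  shows "d \<le> 0"
proof (rule ccontr)
  assume "\<not> d \<le> 0"
  have "at s within {0..} = at s" using assms(2) by (intro at_within_interior) simp
  then obtain e where "0 < e" and e: "\<And>h. 0 < h \<Longrightarrow> h < e \<Longrightarrow> f (s - h) < f s"
    using DERIV_pos_inc_left[of f d s] assms(1) \<open>\<not> d \<le> 0\<close> by auto
  define h where "h = min (e / 2) s"
  have "0 < h" "h < e" "h \<le> s" using \<open>0 < e\<close> assms(2) by (auto simp: h_def)
  then show False
    using e[of h] assms(3) assms(4)[of "s - h"] by simp
qed

lemma eventually_at_right_pos:
  fixes f :: "real \<Rightarrow> real"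
  assumes "continuous (at s within {0..}) f" "0 \<le> s" "0 < f s"
  shows "eventually (\<lambda>t. 0 < f t) (at_right s)"
proof -
  have "at_right s \<le> at s within {0..}" using assms(2) by (intro at_le) auto
  then have "(f \<longlongrightarrow> f s) (at_right s)"
    using assms(1) by (auto simp: continuous_within intro: tendsto_mono)
  then show ?thesis using assms(3) by (rule order_tendstoD(1))
qed

section \<open>Lohe flows\<close>

locale lohe_flow =
  fixes \<kappa> :: real and N :: nat and T :: "nat \<Rightarrow> real \<Rightarrow> real^'n^'m"
  assumes ode: "\<And>k t. k < N \<Longrightarrow> 0 \<le> t \<Longrightarrow>
    (T k has_vector_derivative lohe_rhs \<kappa> (lohe_avg N (\<lambda>l. T l t)) (T k t)) (at t within {0..})"
begin

lemma continuous_flow: "k < N \<Longrightarrow> 0 \<le> t \<Longrightarrow> continuous (at t within {0..}) (T k)"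
  by (rule has_vector_derivative_continuous[OF ode])

lemma transpose_lohe_flow: "lohe_flow \<kappa> N (\<lambda>k t. transpose (T k t))"
  by unfold_locales
    (use has_vector_derivative_transpose[OF ode] in \<open>simp add: lohe_rhs_transpose lohe_avg_transpose\<close>)

lemma unit_outer_preserved:
  assumes "k < N" "0 \<le> t" "T k 0 = outer u v" "norm u = 1" "norm v = 1"
  shows "\<exists>p q. norm p = 1 \<and> norm q = 1 \<and> T k t = outer p q"
proof (rule unit_outer_if_gram_norm)
  note conserved = lohe_norms_conserved[OF ode[OF \<open>k < N\<close>] \<open>0 \<le> t\<close>]
  show "norm (T k t) = 1"
    using conserved(1) assms(3-5) by (simp add: norm_outer)
  show "norm (transpose (T k t) ** T k t) = 1"
    using conserved(2) assms(3-5) by (simp add: transpose_outer outer_mult_outer dot_square_norm norm_outer)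
qed

lemma has_real_derivative_col_overlap_flow:
  assumes "k < N" "l < N" "0 \<le> t"
  shows "((\<lambda>t. col_overlap (T k t) (T l t)) has_real_derivative
    col_overlap_deriv (T k t) (lohe_rhs \<kappa> (lohe_avg N (\<lambda>k. T k t)) (T k t))
      (T l t) (lohe_rhs \<kappa> (lohe_avg N (\<lambda>k. T k t)) (T l t))) (at t within {0..})"
  using assms by (intro has_real_derivative_col_overlap ode)

end

locale coherent_lohe_flow = lohe_flow +
  fixes u :: "nat \<Rightarrow> real^'m" and v :: "nat \<Rightarrow> real^'n"
  assumes kappa_pos: "0 < \<kappa>"
    and init: "\<And>k. k < N \<Longrightarrow> T k 0 = outer (u k) (v k)"
    and u_unit: "\<And>k. k < N \<Longrightarrow> norm (u k) = 1"
    and v_unit: "\<And>k. k < N \<Longrightarrow> norm (v k) = 1"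
    and u_pos: "\<And>k l. k < N \<Longrightarrow> l < N \<Longrightarrow> 0 < u k \<bullet> u l"
    and v_pos: "\<And>k l. k < N \<Longrightarrow> l < N \<Longrightarrow> 0 < v k \<bullet> v l"
begin

lemma rank_one: "k < N \<Longrightarrow> 0 \<le> t \<Longrightarrow> \<exists>p q. norm p = 1 \<and> norm q = 1 \<and> T k t = outer p q"
  using unit_outer_preserved init u_unit v_unit by blast

lemma transpose_coherent_lohe_flow: "coherent_lohe_flow \<kappa> N (\<lambda>k t. transpose (T k t)) v u"
  using transpose_lohe_flow kappa_pos init u_unit v_unit u_pos v_pos
  by (simp add: coherent_lohe_flow_def coherent_lohe_flow_axioms_def transpose_outer)

text \<open>The sign conditions say that the factors can be chosen coherently
  (\<open>coherent_factors_exist\<close>); coherence is what drives the growth estimate for the overlaps.\<close>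

definition overlaps_above :: "(real \<Rightarrow> real) \<Rightarrow> real \<Rightarrow> bool" where
  "overlaps_above g t \<longleftrightarrow> (\<forall>k<N. \<forall>l<N.
     g t < col_overlap (T k t) (T l t) \<and> g t < col_overlap (transpose (T k t)) (transpose (T l t))
     \<and> 0 < T k t \<bullet> T l t \<and> 0 < triple_overlap (T 0 t) (T k t) (T l t))"

text \<open>Where the column overlap first touches \<open>g\<close>, it grows at rate at least
  \<open>4 \<kappa> / N g (1 - g)\<close>, twice as fast as \<open>g\<close>, so it cannot have come down to \<open>g\<close>.\<close>

lemma col_overlap_above_at_first_exit:
  assumes g: "\<And>t. 0 < g t" "\<And>t. g t < 1"
    and g_deriv: "\<And>t. (g has_real_derivative 2 * \<kappa> / N * g t * (1 - g t)) (at t)"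
    and "0 < s" "k < N" "l < N" and coh: "coherent_factors N (\<lambda>k. T k s) U V"
    and low: "\<And>k l. k < N \<Longrightarrow> l < N \<Longrightarrow>
      g s \<le> col_overlap (T k s) (T l s) \<and> g s \<le> col_overlap (transpose (T k s)) (transpose (T l s))"
    and before: "\<And>t. 0 \<le> t \<Longrightarrow> t < s \<Longrightarrow> g t < col_overlap (T k t) (T l t)"
  shows "g s < col_overlap (T k s) (T l s)"
proof (rule ccontr)
  assume "\<not> g s < col_overlap (T k s) (T l s)"
  then have touch: "col_overlap (T k s) (T l s) = g s" using low[OF \<open>k < N\<close> \<open>l < N\<close>] by simp
  have "0 < N" using \<open>k < N\<close> by simp
  let ?c = "2 * \<kappa> / N * g s * (1 - g s)"
  let ?d = "col_overlap_deriv (T k s) (lohe_rhs \<kappa> (lohe_avg N (\<lambda>k. T k s)) (T k s))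
    (T l s) (lohe_rhs \<kappa> (lohe_avg N (\<lambda>k. T k s)) (T l s))"
  have d: "((\<lambda>t. col_overlap (T k t) (T l t)) has_real_derivative ?d) (at s within {0..})"
    using \<open>0 < s\<close> by (intro has_real_derivative_col_overlap_flow \<open>k < N\<close> \<open>l < N\<close>) simp
  have "4 * \<kappa> / N * g s * (1 - g s) \<le> ?d"
    by (rule col_overlap_deriv_lohe_lower_bound[where X = "\<lambda>k. T k s"])
      (use kappa_pos \<open>k < N\<close> \<open>l < N\<close> coh low touch g in auto)
  moreover have "0 < ?c" using kappa_pos \<open>0 < N\<close> g[of s] by simp
  ultimately have "0 < ?d - ?c" by simp
  moreover have "?d - ?c \<le> 0"
  proof (rule derivative_nonpos_at_first_zero)
    show "((\<lambda>t. col_overlap (T k t) (T l t) - g t) has_real_derivative ?d - ?c) (at s within {0..})"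
      using d g_deriv[of s] by (auto intro: derivative_intros has_field_derivative_at_within)
  qed (use \<open>0 < s\<close> touch before in auto)
  ultimately show False by simp
qed

lemma overlaps_above_initially:
  assumes g0: "\<And>k l. k < N \<Longrightarrow> l < N \<Longrightarrow> g 0 < (u k \<bullet> u l)^2 \<and> g 0 < (v k \<bullet> v l)^2"
  shows "overlaps_above g 0"
  unfolding overlaps_above_def
proof (intro allI impI conjI)
  fix k l assume kl: "k < N" "l < N"
  then have "0 < N" by simp
  note unit = u_unit[OF kl(1)] v_unit[OF kl(1)] u_unit[OF kl(2)] v_unit[OF kl(2)]
    u_unit[OF \<open>0 < N\<close>] v_unit[OF \<open>0 < N\<close>]
  show "g 0 < col_overlap (T k 0) (T l 0)" "g 0 < col_overlap (transpose (T k 0)) (transpose (T l 0))"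
    using g0[OF kl] unit by (simp_all add: init kl col_overlap_outer transpose_outer)
  show "0 < T k 0 \<bullet> T l 0"
    using u_pos[OF kl] v_pos[OF kl] by (simp add: init kl inner_outer)
  show "0 < triple_overlap (T 0 0) (T k 0) (T l 0)"
    using u_pos kl \<open>0 < N\<close> unit by (simp add: init triple_overlap_outer)
qed

lemma continuous_overlaps:
  assumes "k < N" "l < N" "0 \<le> t"
  shows "continuous (at t within {0..}) (\<lambda>t. col_overlap (T k t) (T l t))"
    and "continuous (at t within {0..}) (\<lambda>t. col_overlap (transpose (T k t)) (transpose (T l t)))"
    and "continuous (at t within {0..}) (\<lambda>t. T k t \<bullet> T l t)"
    and "continuous (at t within {0..}) (\<lambda>t. triple_overlap (T 0 t) (T k t) (T l t))"
  using assms continuous_flow[of k t] continuous_flow[of l t] continuous_flow[of 0 t]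
  by (auto intro!: continuous_intros)

lemma overlaps_pos_if_col_overlaps_pos:
  assumes "k < N" "l < N" "0 \<le> t"
    and col_pos: "\<And>k l. k < N \<Longrightarrow> l < N \<Longrightarrow>
      0 < col_overlap (T k t) (T l t) \<and> 0 < col_overlap (transpose (T k t)) (transpose (T l t))"
  shows "T k t \<bullet> T l t \<noteq> 0" and "triple_overlap (T 0 t) (T k t) (T l t) \<noteq> 0"
proof -
  have "0 < N" using assms by simp
  obtain p q where pq: "norm p = 1" "norm q = 1" "T k t = outer p q" using rank_one assms by blast
  obtain p' q' where pq': "norm p' = 1" "norm q' = 1" "T l t = outer p' q'" using rank_one assms by blast
  obtain p0 q0 where pq0: "norm p0 = 1" "norm q0 = 1" "T 0 t = outer p0 q0"
    using rank_one \<open>0 < N\<close> assms by blast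
  have "(T k t \<bullet> T l t)^2 = col_overlap (T k t) (T l t) * col_overlap (transpose (T k t)) (transpose (T l t))"
    using pq pq' by (simp add: inner_outer_sq)
  then show "T k t \<bullet> T l t \<noteq> 0" using col_pos[OF assms(1,2)] by (auto simp: zero_less_mult_iff)
  have "triple_overlap (T 0 t) (T k t) (T l t)^2
      = col_overlap (T 0 t) (T k t) * col_overlap (T k t) (T l t) * col_overlap (T 0 t) (T l t)"
    using pq pq' pq0 by (simp add: triple_overlap_sq)
  then show "triple_overlap (T 0 t) (T k t) (T l t) \<noteq> 0"
    using col_pos[OF \<open>0 < N\<close> assms(1)] col_pos[OF assms(1,2)] col_pos[OF \<open>0 < N\<close> assms(2)]
    by (auto simp: zero_less_mult_iff)
qed

lemma overlaps_at_least_at_first_exit: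
  assumes cont_g: "continuous (at s within {0..}) g" and "0 < s" "k < N" "l < N"
    and before: "\<And>t. 0 \<le> t \<Longrightarrow> t < s \<Longrightarrow> overlaps_above g t"
  shows "g s \<le> col_overlap (T k s) (T l s) \<and> g s \<le> col_overlap (transpose (T k s)) (transpose (T l s))
    \<and> 0 \<le> T k s \<bullet> T l s \<and> 0 \<le> triple_overlap (T 0 s) (T k s) (T l s)"
proof -
  have left: "0 \<le> f s"
    if "continuous (at s within {0..}) f" "\<And>t. 0 \<le> t \<Longrightarrow> t < s \<Longrightarrow> 0 < f t" for f :: "real \<Rightarrow> real"
    using nonneg_if_nonneg_at_left[OF \<open>0 < s\<close> that(1)] that(2) by (simp add: less_imp_le)
  note cont = continuous_overlaps[OF \<open>k < N\<close> \<open>l < N\<close> less_imp_le[OF \<open>0 < s\<close>]]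
  have earlier: "g t < col_overlap (T k t) (T l t) \<and> g t < col_overlap (transpose (T k t)) (transpose (T l t))
      \<and> 0 < T k t \<bullet> T l t \<and> 0 < triple_overlap (T 0 t) (T k t) (T l t)" if "0 \<le> t" "t < s" for t
    using before[OF that] \<open>k < N\<close> \<open>l < N\<close> unfolding overlaps_above_def by blast
  have "0 \<le> col_overlap (T k s) (T l s) - g s"
    by (rule left) (use cont cont_g earlier in \<open>auto intro!: continuous_intros\<close>)
  moreover have "0 \<le> col_overlap (transpose (T k s)) (transpose (T l s)) - g s"
    by (rule left) (use cont cont_g earlier in \<open>auto intro!: continuous_intros\<close>)
  moreover have "0 \<le> T k s \<bullet> T l s"
    by (rule left) (use cont earlier in auto)
  moreover have "0 \<le> triple_overlap (T 0 s) (T k s) (T l s)"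
    by (rule left) (use cont earlier in auto)
  ultimately show ?thesis by simp
qed

lemma coherent_factors_if_overlaps_pos:
  assumes "0 \<le> t" "0 < N"
    and pos: "\<And>k l. k < N \<Longrightarrow> l < N \<Longrightarrow> 0 < T k t \<bullet> T l t \<and> 0 < triple_overlap (T 0 t) (T k t) (T l t)"
  shows "\<exists>U V. coherent_factors N (\<lambda>k. T k t) U V"
proof (rule coherent_factors_exist[OF \<open>0 < N\<close>])
  show "\<exists>p q. norm p = 1 \<and> norm q = 1 \<and> T k t = outer p q" if "k < N" for k
    using rank_one[OF that \<open>0 \<le> t\<close>] .
qed (use pos in blast)+

text \<open>The row overlaps are the column overlaps of the transposed flow, which is again a coherent
  Lohe flow.\<close>

lemma overlaps_above_at_first_exit:
  assumes g: "\<And>t. 0 < g t" "\<And>t. g t < 1"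
    and g_deriv: "\<And>t. (g has_real_derivative 2 * \<kappa> / N * g t * (1 - g t)) (at t)"
    and "0 < s" and before: "\<And>t. 0 \<le> t \<Longrightarrow> t < s \<Longrightarrow> overlaps_above g t"
  shows "overlaps_above g s"
proof -
  have "continuous (at s within {0..}) g"
    using g_deriv by (metis DERIV_isCont continuous_at_imp_continuous_at_within)
  note low = overlaps_at_least_at_first_exit[OF this \<open>0 < s\<close> _ _ before]
  have col_pos: "0 < col_overlap (T k s) (T l s) \<and> 0 < col_overlap (transpose (T k s)) (transpose (T l s))"
    if "k < N" "l < N" for k l
    using low[OF that] g(1)[of s] by linarith
  have pos: "0 < T k s \<bullet> T l s \<and> 0 < triple_overlap (T 0 s) (T k s) (T l s)" if "k < N" "l < N" for k l
    using overlaps_pos_if_col_overlaps_pos[OF that less_imp_le[OF \<open>0 < s\<close>] col_pos] low[OF that]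
    by linarith
  show ?thesis unfolding overlaps_above_def
  proof (intro allI impI conjI)
    fix k l assume kl: "k < N" "l < N"
    then have "0 < N" by simp
    then obtain U V where coh: "coherent_factors N (\<lambda>k. T k s) U V"
      using coherent_factors_if_overlaps_pos[OF less_imp_le[OF \<open>0 < s\<close>] _ pos] by blast
    have earlier: "g t < col_overlap (T k t) (T l t) \<and> g t < col_overlap (transpose (T k t)) (transpose (T l t))"
      if "0 \<le> t" "t < s" for t
      using before[OF that] kl unfolding overlaps_above_def by blast
    show "g s < col_overlap (T k s) (T l s)"
    proof (rule col_overlap_above_at_first_exit[OF g g_deriv \<open>0 < s\<close> kl coh])
      show "g s \<le> col_overlap (T k s) (T l s) \<and> g s \<le> col_overlap (transpose (T k s)) (transpose (T l s))"
        if "k < N" "l < N" for k l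
        using low[OF that] by blast
    qed (use earlier in blast)
    interpret transposed: coherent_lohe_flow \<kappa> N "\<lambda>k t. transpose (T k t)" v u
      by (rule transpose_coherent_lohe_flow)
    show "g s < col_overlap (transpose (T k s)) (transpose (T l s))"
    proof (rule transposed.col_overlap_above_at_first_exit[OF g g_deriv \<open>0 < s\<close> kl
          coherent_factors_transpose[OF coh]])
      show "g s \<le> col_overlap (transpose (T k s)) (transpose (T l s))
          \<and> g s \<le> col_overlap (transpose (transpose (T k s))) (transpose (transpose (T l s)))"
        if "k < N" "l < N" for k l
        using low[OF that] by simp
    qed (use earlier in blast)
    show "0 < T k s \<bullet> T l s" "0 < triple_overlap (T 0 s) (T k s) (T l s)"
      using pos[OF kl] by auto
  qed
qed

lemma overlaps_above_eventually:
  assumes "\<And>t. isCont g t" "0 \<le> s" "overlaps_above g s"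
  shows "eventually (overlaps_above g) (at_right s)"
proof -
  have cont_g: "continuous (at s within {0..}) g"
    using assms(1) by (rule continuous_at_imp_continuous_at_within)
  have "eventually (\<lambda>t. g t < col_overlap (T k t) (T l t)
      \<and> g t < col_overlap (transpose (T k t)) (transpose (T l t))
      \<and> 0 < T k t \<bullet> T l t \<and> 0 < triple_overlap (T 0 t) (T k t) (T l t)) (at_right s)"
    if "k < N" "l < N" for k l
  proof -
    note cont = continuous_overlaps[OF that assms(2)]
    have above: "g s < col_overlap (T k s) (T l s)" "g s < col_overlap (transpose (T k s)) (transpose (T l s))"
      "0 < T k s \<bullet> T l s" "0 < triple_overlap (T 0 s) (T k s) (T l s)"
      using assms(3) that by (auto simp: overlaps_above_def)
    have "eventually (\<lambda>t. 0 < col_overlap (T k t) (T l t) - g t) (at_right s)"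
      "eventually (\<lambda>t. 0 < col_overlap (transpose (T k t)) (transpose (T l t)) - g t) (at_right s)"
      "eventually (\<lambda>t. 0 < T k t \<bullet> T l t) (at_right s)"
      "eventually (\<lambda>t. 0 < triple_overlap (T 0 t) (T k t) (T l t)) (at_right s)"
      using above cont cont_g by (auto intro!: eventually_at_right_pos[OF _ assms(2)] continuous_intros
          simp del: diff_gt_0_iff_gt)
    then show ?thesis by eventually_elim auto
  qed
  then have "eventually (\<lambda>t. \<forall>k\<in>{..<N}. \<forall>l\<in>{..<N}. g t < col_overlap (T k t) (T l t)
      \<and> g t < col_overlap (transpose (T k t)) (transpose (T l t))
      \<and> 0 < T k t \<bullet> T l t \<and> 0 < triple_overlap (T 0 t) (T k t) (T l t)) (at_right s)"
    by (intro eventually_ball_finite finite_lessThan ballI) auto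
  then show ?thesis by eventually_elim (auto simp: overlaps_above_def)
qed

lemma overlaps_above_forever:
  assumes g: "\<And>t. 0 < g t" "\<And>t. g t < 1"
    and g_deriv: "\<And>t. (g has_real_derivative 2 * \<kappa> / N * g t * (1 - g t)) (at t)"
    and g0: "\<And>k l. k < N \<Longrightarrow> l < N \<Longrightarrow> g 0 < (u k \<bullet> u l)^2 \<and> g 0 < (v k \<bullet> v l)^2"
    and "0 \<le> t"
  shows "overlaps_above g t"
proof (rule real_induct_at_right[OF _ _ \<open>0 \<le> t\<close>])
  fix s :: real assume "0 \<le> s" "\<And>t. 0 \<le> t \<Longrightarrow> t < s \<Longrightarrow> overlaps_above g t"
  then show "overlaps_above g s"
    using overlaps_above_initially[where g = g, OF g0] overlaps_above_at_first_exit[OF g g_deriv]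
    by (cases "s = 0") auto
next
  fix s :: real assume "0 \<le> s" "overlaps_above g s"
  then show "eventually (overlaps_above g) (at_right s)"
    using g_deriv by (intro overlaps_above_eventually DERIV_isCont) auto
qed

lemma inner_gt_if_overlaps_above:
  assumes "overlaps_above g t" "0 \<le> t" "0 < g t" "i < N" "j < N"
  shows "g t < T i t \<bullet> T j t"
proof -
  obtain p q where pq: "norm p = 1" "norm q = 1" "T i t = outer p q" using rank_one assms by blast
  obtain p' q' where pq': "norm p' = 1" "norm q' = 1" "T j t = outer p' q'" using rank_one assms by blast
  have above: "g t < col_overlap (T i t) (T j t)" "g t < col_overlap (transpose (T i t)) (transpose (T j t))"
    "0 < T i t \<bullet> T j t"
    using assms(1,4,5) by (auto simp: overlaps_above_def)
  have "(g t)^2 < col_overlap (T i t) (T j t) * col_overlap (transpose (T i t)) (transpose (T j t))"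
    unfolding power2_eq_square using above(1,2) \<open>0 < g t\<close> by (intro mult_strict_mono) auto
  also have "\<dots> = (T i t \<bullet> T j t)^2"
    using pq pq' by (simp add: inner_outer_sq)
  finally show ?thesis
    using above(3) power_less_imp_less_base[of "g t" 2 "T i t \<bullet> T j t"] by simp
qed

lemma initial_overlaps_bounded_below:
  "\<exists>m>0. \<forall>k<N. \<forall>l<N. m \<le> (u k \<bullet> u l)^2 \<and> m \<le> (v k \<bullet> v l)^2"
proof (cases "N = 0")
  case False
  define ov where "ov p = min ((u (fst p) \<bullet> u (snd p))^2) ((v (fst p) \<bullet> v (snd p))^2)" for p
  define m where "m = Min (ov ` ({..<N} \<times> {..<N}))"
  have fin: "finite (ov ` ({..<N} \<times> {..<N}))" "ov ` ({..<N} \<times> {..<N}) \<noteq> {}"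
    using False by auto
  obtain p where "p \<in> {..<N} \<times> {..<N}" "m = ov p"
    using Min_in[OF fin] unfolding m_def by blast
  then have "0 < m"
    using u_pos[of "fst p" "snd p"] v_pos[of "fst p" "snd p"] by (auto simp: ov_def)
  moreover have "m \<le> ov (k, l)" if "k < N" "l < N" for k l
    unfolding m_def using that by (intro Min_le fin(1) imageI) simp
  ultimately show ?thesis by (auto simp: ov_def)
qed (use zero_less_one in blast)

lemma frob_norm_diff_tendsto_0:
  assumes "i < N" "j < N"
  shows "((\<lambda>t. frob_norm (T i t - T j t)) \<longlongrightarrow> 0) at_top"
proof -
  have "0 < N" using assms by simp
  obtain m where "0 < m"
    and m: "\<And>k l. k < N \<Longrightarrow> l < N \<Longrightarrow> m \<le> (u k \<bullet> u l)^2 \<and> m \<le> (v k \<bullet> v l)^2"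
    using initial_overlaps_bounded_below by blast
  define g where "g = logistic (1 / m) (2 * \<kappa> / N)"
  have g: "0 < g t" "g t < 1" for t
    using \<open>0 < m\<close> by (simp_all add: g_def logistic_pos logistic_less_1)
  have g_deriv: "(g has_real_derivative 2 * \<kappa> / N * g t * (1 - g t)) (at t)" for t
    using \<open>0 < m\<close> unfolding g_def by (intro has_real_derivative_logistic) simp
  have "g 0 < (u k \<bullet> u l)^2 \<and> g 0 < (v k \<bullet> v l)^2" if "k < N" "l < N" for k l
    using logistic_0_less[OF \<open>0 < m\<close>, of "2 * \<kappa> / N"] m[OF that] unfolding g_def by auto
  then have above: "overlaps_above g t" if "0 \<le> t" for t
    using overlaps_above_forever[OF g g_deriv _ that] by blast
  have unit: "norm (T k t) = 1" if "k < N" "0 \<le> t" for k t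
    using rank_one[OF that] by (auto simp: norm_outer)
  have bound: "eventually (\<lambda>t. frob_norm (T i t - T j t) \<le> sqrt (2 - 2 * g t)) at_top"
    using eventually_ge_at_top[of 0]
  proof eventually_elim
    case (elim t)
    then show ?case
      using norm_diff_unit[OF unit[OF \<open>i < N\<close> elim] unit[OF \<open>j < N\<close> elim]]
        inner_gt_if_overlaps_above[OF above[OF elim] elim g(1) assms]
      by (simp add: frob_norm_eq_norm)
  qed
  have "(g \<longlongrightarrow> 1) at_top"
    unfolding g_def using kappa_pos \<open>0 < N\<close> by (intro logistic_tendsto_1) simp
  then have "((\<lambda>t. sqrt (2 - 2 * g t)) \<longlongrightarrow> sqrt (2 - 2 * 1)) at_top"
    by (intro tendsto_intros)
  then have lim: "((\<lambda>t. sqrt (2 - 2 * g t)) \<longlongrightarrow> 0) at_top" by simp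
  have nonneg: "eventually (\<lambda>t. 0 \<le> frob_norm (T i t - T j t)) at_top"
    by (simp add: frob_norm_eq_norm)
  show ?thesis by (rule tendsto_sandwich[OF nonneg bound tendsto_const lim])
qed

end

theorem theorem3p5:
  fixes \<kappa> :: real and N :: nat
    and T :: "nat \<Rightarrow> real \<Rightarrow> real^'n^'m"
    and u :: "nat \<Rightarrow> real^'m" and v :: "nat \<Rightarrow> real^'n"
  assumes kappa_pos: "\<kappa> > 0"
    and ode: "\<And>i t. i < N \<Longrightarrow> t \<ge> 0 \<Longrightarrow>
        (T i has_vector_derivative lohe_rhs \<kappa> (lohe_avg N (\<lambda>k. T k t)) (T i t)) (at t within {0..})"
    and init: "\<And>i. i < N \<Longrightarrow> T i 0 = outer (u i) (v i)"
    and u_unit: "\<And>i. i < N \<Longrightarrow> norm (u i) = 1"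
    and v_unit: "\<And>i. i < N \<Longrightarrow> norm (v i) = 1"
    and u_pos: "\<And>i j. i < N \<Longrightarrow> j < N \<Longrightarrow> u i \<bullet> u j > 0"
    and v_pos: "\<And>i j. i < N \<Longrightarrow> j < N \<Longrightarrow> v i \<bullet> v j > 0"
    and ij: "i < N" "j < N"
  shows "((\<lambda>t. frob_norm (T i t - T j t)) \<longlongrightarrow> 0) at_top"
proof -
  interpret coherent_lohe_flow \<kappa> N T u v
    by unfold_locales (use assms in auto)
  show ?thesis by (rule frob_norm_diff_tendsto_0[OF ij])
qed

end
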